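(* Let $G$ be a group and let $\phi:G\to G$ be a periodic automorphism of least period $m$ (i.e. $\phi^m=\mathrm{id}$ and $\phi^k\neq \mathrm{id}$ for $0<k<m$). Let $Z$ denote one of the counting functions $RT$, $RT^f$, $RT^{ff}$, $AM^f$, and suppose $Z(\phi^n)<\infty$ for all $n\ge 1$. Then $$Z_\phi(z)=\prod_{d\mid m}\sqrt[d]{(1-z^d)^{-P(d)}},$$ where the product is over all positive divisors $d$ of $m$ and $P(d)$ is the integer $$P(d)=\sum_{d_1\mid d}\mu(d_1)\,Z(\phi^{d/d_1}),$$ with $\mu$ the number-theoretic Möbius function.
   Context: For a group $G$, $\widehat G$ denotes the unitary dual (equivalence classes of irreducible unitary representations, with the hull-kernel topology), $\widehat G_f\subset \widehat G$ the classes of finite-dimensional irreducible unitary representations, and $\widehat G_{ff}\subset\widehat G_f$ those that factor through a finite group. For an endomorphism $\phi$ of $G$: $RT(\phi)$ is the number of $[\rho]\in\widehat G$ with $\rho\circ\phi$ equivalent to $\rho$; $RT^f(\phi)$ and $RT^{ff}(\phi)$ are defined in the same way using $\widehat G_f$ and $\widehat G_{ff}$. A class $[\rho]$ is $\phi$-irreducible if $\rho\circ\phi^n$ is irreducible for every $n\ge 0$; $\widehat G^\phi_f$ denotes the set of $\phi$-irreducible classes in $\widehat G_f$ (with the subspace topology). On $\widehat G^\phi_f$ the map $\widehat\phi:[\rho]\mapsto[\rho\circ\phi]$ is well defined, and its $n$-periodic points are exactly the classes with $\rho\circ\phi^n\sim\rho$. $AM^f(\phi^n)$ is the number of isolated $n$-periodic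 points of $\widehat\phi$ on $\widehat G^\phi_f$. For $Z$ one of $RT,RT^f,RT^{ff},AM^f$, the zeta function is $Z_\phi(z)=\exp\left(\sum_{n\ge1}\frac{Z(\phi^n)}{n}z^n\right)$. *)

theory Defs
  imports "HOL-Algebra.Coset" "HOL-Analysis.Analysis" "HOL-Computational_Algebra.Squarefree"
begin

definition moebius :: "nat \<Rightarrow> int" where
  "moebius n = (if n > 0 \<and> squarefree n then (-1) ^ card (prime_factors n) else 0)"

text \<open>Every irreducible unitary representation of a (discrete) group with element type 'a
  is cyclic, hence has Hilbert dimension at most that of l2('a \<times> nat); so every class
  of the unitary dual has a representative acting on a closed subspace of l2('a \<times> nat).\<close>

type_synonym 'a vec = "'a \<times> nat \<Rightarrow> complex"
type_synonym 'a rep = "'a vec set \<times> ('a \<Rightarrow> 'a vec \<Rightarrow> 'a vec)"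

definition l2 :: "'a vec set" where
  "l2 = {x. (\<lambda>i. (cmod (x i))\<^sup>2) summable_on UNIV}"

definition l2norm :: "'a vec \<Rightarrow> real" where
  "l2norm x = sqrt (infsum (\<lambda>i. (cmod (x i))\<^sup>2) UNIV)"

definition vzero :: "'a vec" where "vzero = (\<lambda>i. 0)"

definition closed_subspace :: "'a vec set \<Rightarrow> bool" where
  "closed_subspace H \<longleftrightarrow> H \<subseteq> l2 \<and> vzero \<in> H
     \<and> (\<forall>x\<in>H. \<forall>y\<in>H. (\<lambda>i. x i + y i) \<in> H)
     \<and> (\<forall>c::complex. \<forall>x\<in>H. (\<lambda>i. c * x i) \<in> H)
     \<and> (\<forall>X f. (\<forall>n. X n \<in> H) \<and> f \<in> l2 \<and> (\<lambda>n. l2norm (\<lambda>i. X n i - f i)) \<longlonglongrightarrow> 0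
              \<longrightarrow> f \<in> H)"

definition fin_dim :: "'a vec set \<Rightarrow> bool" where
  "fin_dim H \<longleftrightarrow> (\<exists>B. finite B \<and> B \<subseteq> H \<and>
      H = {x. \<exists>c::'a vec \<Rightarrow> complex. x = (\<lambda>i. \<Sum>b\<in>B. c b * b i)})"

definition unitary_map :: "'a vec set \<Rightarrow> 'a vec set \<Rightarrow> ('a vec \<Rightarrow> 'a vec) \<Rightarrow> bool" where
  "unitary_map H H' U \<longleftrightarrow> bij_betw U H H'
     \<and> (\<forall>x\<in>H. \<forall>y\<in>H. U (\<lambda>i. x i + y i) = (\<lambda>i. U x i + U y i))
     \<and> (\<forall>c::complex. \<forall>x\<in>H. U (\<lambda>i. c * x i) = (\<lambda>i. c * U x i))
     \<and> (\<forall>x\<in>H. l2norm (U x) = l2norm x)"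

definition unitary_rep :: "('a, 'b) monoid_scheme \<Rightarrow> 'a rep \<Rightarrow> bool" where
  "unitary_rep G r \<longleftrightarrow> (case r of (H, \<rho>) \<Rightarrow>
      closed_subspace H
    \<and> (\<forall>g\<in>carrier G. unitary_map H H (\<rho> g))
    \<and> (\<forall>g\<in>carrier G. \<forall>h\<in>carrier G. \<forall>x\<in>H. \<rho> (g \<otimes>\<^bsub>G\<^esub> h) x = \<rho> g (\<rho> h x))
    \<and> (\<forall>x\<in>H. \<rho> \<one>\<^bsub>G\<^esub> x = x))"

definition irreducible_rep :: "('a, 'b) monoid_scheme \<Rightarrow> 'a rep \<Rightarrow> bool" where
  "irreducible_rep G r \<longleftrightarrow> unitary_rep G r \<and> (case r of (H, \<rho>) \<Rightarrow>
      H \<noteq> {vzero}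
    \<and> (\<forall>K. closed_subspace K \<and> K \<subseteq> H \<and> (\<forall>g\<in>carrier G. \<forall>x\<in>K. \<rho> g x \<in> K)
           \<longrightarrow> K = {vzero} \<or> K = H))"

definition rep_equiv :: "('a, 'b) monoid_scheme \<Rightarrow> 'a rep \<Rightarrow> 'a rep \<Rightarrow> bool" where
  "rep_equiv G r s \<longleftrightarrow> (case r of (H, \<rho>) \<Rightarrow> case s of (H', \<sigma>) \<Rightarrow>
      (\<exists>U. unitary_map H H' U \<and> (\<forall>g\<in>carrier G. \<forall>x\<in>H. U (\<rho> g x) = \<sigma> g (U x))))"

definition rep_comp :: "'a rep \<Rightarrow> ('a \<Rightarrow> 'a) \<Rightarrow> 'a rep" where
  "rep_comp r \<psi> = (fst r, \<lambda>g. snd r (\<psi> g))"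

definition irreps :: "('a, 'b) monoid_scheme \<Rightarrow> 'a rep set" where
  "irreps G = {r. irreducible_rep G r}"

definition dual :: "('a, 'b) monoid_scheme \<Rightarrow> 'a rep set set" where
  "dual G = irreps G // {(r, s). r \<in> irreps G \<and> s \<in> irreps G \<and> rep_equiv G r s}"

definition dual_f :: "('a, 'b) monoid_scheme \<Rightarrow> 'a rep set set" where
  "dual_f G = {C \<in> dual G. \<exists>r\<in>C. fin_dim (fst r)}"

text \<open>Factoring through a finite group = factoring through a finite quotient G/N.\<close>
definition factors_finite :: "('a, 'b) monoid_scheme \<Rightarrow> 'a rep \<Rightarrow> bool" where
  "factors_finite G r \<longleftrightarrow> (\<exists>N. N \<lhd> G \<and> finite (carrier (G Mod N))
      \<and> (\<forall>n\<in>N. \<forall>x\<in>fst r. snd r n x = x))"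

definition dual_ff :: "('a, 'b) monoid_scheme \<Rightarrow> 'a rep set set" where
  "dual_ff G = {C \<in> dual_f G. \<exists>r\<in>C. factors_finite G r}"

definition fin_supp :: "('a, 'b) monoid_scheme \<Rightarrow> ('a \<Rightarrow> complex) \<Rightarrow> bool" where
  "fin_supp G f \<longleftrightarrow> finite {g. f g \<noteq> 0} \<and> {g. f g \<noteq> 0} \<subseteq> carrier G"

definition rep_alg :: "'a rep \<Rightarrow> ('a \<Rightarrow> complex) \<Rightarrow> 'a vec \<Rightarrow> 'a vec" where
  "rep_alg r f x = (\<lambda>i. \<Sum>g\<in>{g. f g \<noteq> 0}. f g * snd r g x i)"

definition op_norm :: "'a rep \<Rightarrow> ('a \<Rightarrow> complex) \<Rightarrow> real" where
  "op_norm r f = Sup {l2norm (rep_alg r f x) | x. x \<in> fst r \<and> l2norm x \<le> 1}"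

text \<open>Closure in the hull-kernel topology of the dual: [pi] lies in the closure of S iff
  ker pi contains the intersection of the kernels of S in C*(G), i.e. pi is weakly
  contained in S: norm pi(f) <= sup over sigma in S of norm sigma(f), for f in the
  dense subalgebra C[G].\<close>
definition hk_closure :: "('a, 'b) monoid_scheme \<Rightarrow> 'a rep set set \<Rightarrow> 'a rep set set" where
  "hk_closure G S = {C \<in> dual G. S \<noteq> {} \<and>
      (\<forall>f. fin_supp G f \<longrightarrow> (\<forall>r\<in>C. op_norm r f \<le> (SUP s\<in>\<Union>S. op_norm s f)))}"

definition hk_isolated :: "('a, 'b) monoid_scheme \<Rightarrow> 'a rep set \<Rightarrow> 'a rep set set \<Rightarrow> bool" where
  "hk_isolated G Cl S \<longleftrightarrow> Cl \<in> S \<and> Cl \<notin> hk_closure G (S - {Cl})"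

definition fixed_classes :: "('a, 'b) monoid_scheme \<Rightarrow> 'a rep set set \<Rightarrow> ('a \<Rightarrow> 'a) \<Rightarrow> 'a rep set set" where
  "fixed_classes G D \<psi> = {C \<in> D. \<exists>r\<in>C. rep_equiv G (rep_comp r \<psi>) r}"

definition phi_irreducible :: "('a, 'b) monoid_scheme \<Rightarrow> ('a \<Rightarrow> 'a) \<Rightarrow> 'a rep set \<Rightarrow> bool" where
  "phi_irreducible G \<phi> C \<longleftrightarrow> (\<forall>r\<in>C. \<forall>n. irreducible_rep G (rep_comp r (\<phi> ^^ n)))"

definition dual_f_phi :: "('a, 'b) monoid_scheme \<Rightarrow> ('a \<Rightarrow> 'a) \<Rightarrow> 'a rep set set" where
  "dual_f_phi G \<phi> = {C \<in> dual_f G. phi_irreducible G \<phi> C}"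

datatype zkind = RT | RTf | RTff | AMf

definition Zset :: "zkind \<Rightarrow> ('a, 'b) monoid_scheme \<Rightarrow> ('a \<Rightarrow> 'a) \<Rightarrow> nat \<Rightarrow> 'a rep set set" where
  "Zset k G \<phi> n = (case k of
      RT \<Rightarrow> fixed_classes G (dual G) (\<phi> ^^ n)
    | RTf \<Rightarrow> fixed_classes G (dual_f G) (\<phi> ^^ n)
    | RTff \<Rightarrow> fixed_classes G (dual_ff G) (\<phi> ^^ n)
    | AMf \<Rightarrow> {C. hk_isolated G C (fixed_classes G (dual_f_phi G \<phi>) (\<phi> ^^ n))})"

definition Zcount :: "zkind \<Rightarrow> ('a, 'b) monoid_scheme \<Rightarrow> ('a \<Rightarrow> 'a) \<Rightarrow> nat \<Rightarrow> nat" where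
  "Zcount k G \<phi> n = card (Zset k G \<phi> n)"

definition zeta :: "zkind \<Rightarrow> ('a, 'b) monoid_scheme \<Rightarrow> ('a \<Rightarrow> 'a) \<Rightarrow> complex \<Rightarrow> complex" where
  "zeta k G \<phi> z = exp (\<Sum>n. of_nat (Zcount k G \<phi> (Suc n)) / of_nat (Suc n) * z ^ Suc n)"

definition Pcoef :: "zkind \<Rightarrow> ('a, 'b) monoid_scheme \<Rightarrow> ('a \<Rightarrow> 'a) \<Rightarrow> nat \<Rightarrow> int" where
  "Pcoef k G \<phi> d = (\<Sum>d1 | d1 dvd d. moebius d1 * int (Zcount k G \<phi> (d div d1)))"

end

theory Submission
  imports Defs
begin

(* If \<rho> \<circ> \<psi> is equivalent to \<rho>, so is \<rho> \<circ> \<psi>^k (compose the intertwiners).  As \<phi>^m = id,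
   Bezout makes \<phi>^n and \<phi>^gcd(n,m) powers of one another on G, hence Z(\<phi>^n) = Z(\<phi>^gcd(n,m)).
   By Moebius inversion Z(\<phi>^n) is the sum of P(d) over the common divisors d of n and m, so
   exchanging summations, sum_n Z(\<phi>^n) z^n / n = sum_(d|m) P(d)/d sum_j z^(dj) / j
   = - sum_(d|m) P(d)/d ln(1 - z^d); exponentiating gives the product. *)

lemma moebius_prime_mult:
  assumes p: "prime p" and "e > 0"
  shows "moebius (p * e) = (if p dvd e then 0 else - moebius e)"
proof (cases "p dvd e")
  case True
  then have "p\<^sup>2 dvd p * e" by (simp add: power2_eq_square)
  then have "\<not> squarefree (p * e)" using p by (metis not_squarefreeI not_prime_unit)
  then show ?thesis using True by (simp add: moebius_def)
next
  case False
  have "coprime p e" using p False by (simp add: prime_imp_coprime)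
  then have sq: "squarefree (p * e) \<longleftrightarrow> squarefree e"
    using squarefree_multD(2)[of p e] squarefree_mult_coprime squarefree_prime[OF p] by blast
  have "prime_factors (p * e) = insert p (prime_factors e)"
    using prime_factors_product[of p e] \<open>e > 0\<close> p prime_prime_factors[OF p] by (auto simp: prime_gt_0_nat)
  moreover have "p \<notin> prime_factors e" using False by auto
  ultimately have "card (prime_factors (p * e)) = Suc (card (prime_factors e))" by simp
  then show ?thesis using p \<open>e > 0\<close> False unfolding moebius_def sq by (auto simp: prime_gt_0_nat)
qed

lemma divisors_multiple_of_prime:
  fixes p n :: nat
  assumes p: "prime p" "p dvd n"
  shows "{d. d dvd n \<and> p dvd d} = (*) p ` {e. e dvd n div p}"
proof -
  have "e dvd n div p \<longleftrightarrow> p * e dvd n" for e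
    using p by (simp add: dvd_div_iff_mult prime_gt_0_nat mult.commute[of e])
  then show ?thesis by (auto elim: dvdE)
qed

lemma divisors_div_prime_not_multiple:
  fixes p n :: nat
  assumes p: "prime p" "p dvd n"
  shows "{e. e dvd n div p \<and> \<not> p dvd e} = {d. d dvd n \<and> \<not> p dvd d}"
proof -
  have "e dvd n div p \<longleftrightarrow> e dvd n" if "\<not> p dvd e" for e
  proof
    assume "e dvd n div p" then show "e dvd n" using p by (metis dvd_mult_div_cancel dvd_mult)
  next
    assume "e dvd n"
    moreover have "coprime e p" using prime_imp_coprime[OF p(1) that] by (simp add: coprime_commute)
    ultimately show "e dvd n div p" using p by (metis coprime_dvd_mult_right_iff dvd_mult_div_cancel)
  qed
  then show ?thesis by auto
qed

lemma sum_moebius_divisors: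
  assumes n: "n > 0"
  shows "(\<Sum>d | d dvd n. moebius d) = (if n = 1 then 1 else 0)"
proof (cases "n = 1")
  case True
  then show ?thesis by (simp add: moebius_def)
next
  case False
  then obtain p where p: "prime p" "p dvd n" using prime_factor_nat by blast
  have np: "n div p > 0" using p n dvd_div_eq_0_iff[of p n] by simp
  have "(\<Sum>d | d dvd n. moebius d)
      = (\<Sum>d \<in> {d. d dvd n \<and> \<not> p dvd d} \<union> {d. d dvd n \<and> p dvd d}. moebius d)"
    by (rule sum.cong) auto
  also have "\<dots> = (\<Sum>d | d dvd n \<and> \<not> p dvd d. moebius d) + (\<Sum>d | d dvd n \<and> p dvd d. moebius d)"
    by (rule sum.union_disjoint) (use n in auto)
  also have "(\<Sum>d | d dvd n \<and> p dvd d. moebius d) = (\<Sum>e | e dvd n div p. moebius (p * e))"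
    using p by (simp add: divisors_multiple_of_prime sum.reindex inj_on_def prime_gt_0_nat)
  also have "\<dots> = (\<Sum>e | e dvd n div p. if \<not> p dvd e then - moebius e else 0)"
    using np by (intro sum.cong) (auto simp: moebius_prime_mult[OF p(1)] intro: dvd_pos_nat)
  also have "\<dots> = (\<Sum>e \<in> {e \<in> {e. e dvd n div p}. \<not> p dvd e}. - moebius e)"
    using np by (intro sum.inter_filter[symmetric]) simp
  also have "\<dots> = - (\<Sum>e | e dvd n div p \<and> \<not> p dvd e. moebius e)"
    by (simp add: sum_negf)
  finally show ?thesis
    using False by (simp add: divisors_div_prime_not_multiple[OF p])
qed

lemma bij_betw_divisor_pairs:
  fixes g :: nat
  assumes g: "g > 0"
  shows "bij_betw (\<lambda>(d, d1). (d div d1, d1))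
           (SIGMA d:{d. d dvd g}. {d1. d1 dvd d}) (SIGMA e:{e. e dvd g}. {d1. d1 dvd g div e})"
proof -
  have quotient_dvd: "d div d1 dvd g \<and> d1 dvd g div (d div d1) \<and> d div d1 * d1 = d"
    if dg: "d dvd g" and dd: "d1 dvd d" for d d1
  proof -
    obtain q where "g = d * q" using dg by (rule dvdE)
    obtain r where "d = d1 * r" using dd by (rule dvdE)
    have "d1 > 0" "r > 0" using g \<open>g = d * q\<close> \<open>d = d1 * r\<close> by auto
    then have "d div d1 = r" "g = r * (d1 * q)"
      using \<open>g = d * q\<close> \<open>d = d1 * r\<close> by simp_all
    then show ?thesis using \<open>r > 0\<close> \<open>d = d1 * r\<close> by simp
  qed
  have product_dvd: "e * d1 dvd g \<and> e * d1 div d1 = e" if eg: "e dvd g" and de: "d1 dvd g div e" for e d1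
  proof -
    obtain q where "g = e * q" using eg by (rule dvdE)
    moreover have "e > 0" "q > 0" using g \<open>g = e * q\<close> by auto
    ultimately have "d1 dvd q" "d1 > 0" using de by (auto intro: dvd_pos_nat)
    then show ?thesis using \<open>g = e * q\<close> by auto
  qed
  show ?thesis
    by (rule bij_betw_byWitness[where f' = "\<lambda>(e, d1). (e * d1, d1)"])
      (use quotient_dvd product_dvd in auto)
qed

lemma moebius_inversion:
  fixes f :: "nat \<Rightarrow> int" and g :: nat
  assumes g: "g > 0"
  shows "(\<Sum>d | d dvd g. \<Sum>d1 | d1 dvd d. moebius d1 * f (d div d1)) = f g"
proof -
  have fin_divisors: "finite {d. d dvd n}" if "n dvd g" for n :: nat
    using g that by (auto intro: dvd_pos_nat)
  have "(\<Sum>d | d dvd g. \<Sum>d1 | d1 dvd d. moebius d1 * f (d div d1))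
      = (\<Sum>(d, d1) \<in> (SIGMA d:{d. d dvd g}. {d1. d1 dvd d}). moebius d1 * f (d div d1))"
    using fin_divisors by (intro sum.Sigma) auto
  also have "\<dots> = (\<Sum>(e, d1) \<in> (SIGMA e:{e. e dvd g}. {d1. d1 dvd g div e}). moebius d1 * f e)"
    using sum.reindex_bij_betw[OF bij_betw_divisor_pairs[OF g], of "\<lambda>(e, d1). moebius d1 * f e"]
    by (simp add: case_prod_unfold)
  also have "\<dots> = (\<Sum>e | e dvd g. f e * (\<Sum>d1 | d1 dvd g div e. moebius d1))"
    using fin_divisors by (subst sum.Sigma[symmetric]) (auto simp: sum_distrib_left mult.commute)
  also have "\<dots> = (\<Sum>e | e dvd g. if e = g then f e else 0)"
  proof (rule sum.cong)
    fix e assume "e \<in> {e. e dvd g}"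
    then have "g div e > 0" "g div e = 1 \<longleftrightarrow> e = g"
      using g by (auto elim!: dvdE)
    then show "f e * (\<Sum>d1 | d1 dvd g div e. moebius d1) = (if e = g then f e else 0)"
      by (simp add: sum_moebius_divisors)
  qed simp
  also have "\<dots> = f g" using g by simp
  finally show ?thesis .
qed

lemma unitary_map_id: "unitary_map H H (\<lambda>x. x)"
  by (simp add: unitary_map_def bij_betw_id[unfolded id_def])

lemma unitary_map_comp:
  assumes U: "unitary_map H2 H3 U" and V: "unitary_map H1 H2 V"
  shows "unitary_map H1 H3 (U \<circ> V)"
proof -
  have VH: "V x \<in> H2" if "x \<in> H1" for x
    using V that by (auto simp: unitary_map_def bij_betw_def)
  show ?thesis
    using U V VH bij_betw_trans[of V H1 H2 U H3] by (auto simp: unitary_map_def)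
qed

lemma rep_equiv_refl: "rep_equiv G r r"
  using unitary_map_id by (auto simp: rep_equiv_def split: prod.split)

lemma rep_equiv_rep_comp_comp:
  assumes \<psi>: "\<psi> \<in> carrier G \<rightarrow> carrier G"
    and "rep_equiv G (rep_comp r \<psi>) r" and "rep_equiv G (rep_comp r \<theta>) r"
  shows "rep_equiv G (rep_comp r (\<theta> \<circ> \<psi>)) r"
proof -
  obtain H \<rho> where r: "r = (H, \<rho>)" by fastforce
  obtain U where U: "unitary_map H H U" and U_intertw: "\<forall>g\<in>carrier G. \<forall>x\<in>H. U (\<rho> (\<psi> g) x) = \<rho> g (U x)"
    using assms(2) by (auto simp: r rep_equiv_def rep_comp_def)
  obtain V where V: "unitary_map H H V" and V_intertw: "\<forall>g\<in>carrier G. \<forall>x\<in>H. V (\<rho> (\<theta> g) x) = \<rho> g (V x)"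
    using assms(3) by (auto simp: r rep_equiv_def rep_comp_def)
  have "U (V (\<rho> (\<theta> (\<psi> g)) x)) = \<rho> g (U (V x))" if g: "g \<in> carrier G" and x: "x \<in> H" for g x
  proof -
    have "\<psi> g \<in> carrier G" "V x \<in> H"
      using \<psi> g V x by (auto simp: unitary_map_def bij_betw_def)
    then show ?thesis using U_intertw V_intertw g x by simp
  qed
  then show ?thesis
    using unitary_map_comp[OF U V] by (auto simp: r rep_equiv_def rep_comp_def)
qed

lemma rep_equiv_rep_comp_funpow:
  assumes "\<psi> \<in> carrier G \<rightarrow> carrier G" and "rep_equiv G (rep_comp r \<psi>) r"
  shows "rep_equiv G (rep_comp r (\<psi> ^^ k)) r"
proof (induction k)
  case 0
  show ?case using rep_equiv_refl[of G r] by (simp add: rep_comp_def)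
next
  case (Suc k)
  then show ?case
    using rep_equiv_rep_comp_comp[OF assms] by (simp only: funpow_Suc_right)
qed

lemma fixed_classes_subset_funpow:
  assumes "\<psi> \<in> carrier G \<rightarrow> carrier G"
  shows "fixed_classes G D \<psi> \<subseteq> fixed_classes G D (\<psi> ^^ k)"
  using rep_equiv_rep_comp_funpow[OF assms] unfolding fixed_classes_def by blast

lemma fixed_classes_cong:
  assumes "\<forall>g\<in>carrier G. \<psi>1 g = \<psi>2 g"
  shows "fixed_classes G D \<psi>1 = fixed_classes G D \<psi>2"
proof -
  have "rep_equiv G (rep_comp r \<psi>1) r = rep_equiv G (rep_comp r \<psi>2) r" for r
    using assms by (simp add: rep_equiv_def rep_comp_def split: prod.split)
  then show ?thesis unfolding fixed_classes_def by simp
qed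

lemma funpow_funcset: "f \<in> A \<rightarrow> A \<Longrightarrow> f ^^ n \<in> A \<rightarrow> A"
  by (induction n) auto

lemma fixed_classes_funpow_gcd:
  assumes \<phi>: "\<phi> \<in> carrier G \<rightarrow> carrier G" and periodic: "\<forall>g\<in>carrier G. (\<phi> ^^ m) g = g"
  shows "fixed_classes G D (\<phi> ^^ n) = fixed_classes G D (\<phi> ^^ gcd n m)"
proof (cases "n = 0")
  case True
  then show ?thesis using periodic by (simp add: fixed_classes_cong)
next
  case False
  show ?thesis
  proof
    obtain c where "n = gcd n m * c" by (metis gcd_dvd1 dvdE)
    then have "(\<phi> ^^ gcd n m) ^^ c = \<phi> ^^ n" by (simp add: funpow_mult)
    then show "fixed_classes G D (\<phi> ^^ gcd n m) \<subseteq> fixed_classes G D (\<phi> ^^ n)"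
      using fixed_classes_subset_funpow[OF funpow_funcset[OF \<phi>]] by metis
  next
    obtain x y where bezout: "n * x = m * y + gcd n m" using bezout_nat[of n m] False by auto
    have "((\<phi> ^^ n) ^^ x) g = (\<phi> ^^ gcd n m) g" if "g \<in> carrier G" for g
    proof -
      have "((\<phi> ^^ n) ^^ x) g = (\<phi> ^^ (n * x mod m)) g"
        using periodic that by (simp add: funpow_mult mult.commute funpow_mod_eq)
      also have "n * x mod m = gcd n m mod m" using bezout by simp
      finally show ?thesis using periodic that by (simp add: funpow_mod_eq)
    qed
    then show "fixed_classes G D (\<phi> ^^ n) \<subseteq> fixed_classes G D (\<phi> ^^ gcd n m)"
      using fixed_classes_subset_funpow[OF funpow_funcset[OF \<phi>], of D n x]
        fixed_classes_cong[of G "(\<phi> ^^ n) ^^ x" "\<phi> ^^ gcd n m" D] by blast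
  qed
qed

lemma Zcount_funpow_gcd:
  assumes "\<phi> \<in> carrier G \<rightarrow> carrier G" and "\<forall>g\<in>carrier G. (\<phi> ^^ m) g = g"
  shows "Zcount k G \<phi> n = Zcount k G \<phi> (gcd n m)"
  using fixed_classes_funpow_gcd[OF assms] by (cases k) (simp_all add: Zcount_def Zset_def)

lemma sums_ln_one_minus_power:
  fixes z :: complex
  assumes z: "norm z < 1" and d: "d > 0"
  shows "(\<lambda>n. if d dvd n then z ^ n / of_nat n else 0) sums (- ln (1 - z ^ d) / of_nat d)"
proof -
  have "norm (- (z ^ d)) < 1" using z d by (simp add: norm_power power_less_one_iff)
  from sums_minus[OF Ln_series'[OF this]]
  have "(\<lambda>j. (z ^ d) ^ j / of_nat j) sums (- ln (1 - z ^ d))" by simp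
  from sums_divide[OF this, of "of_nat d"]
  have "(\<lambda>j. z ^ (d * j) / of_nat (d * j)) sums (- ln (1 - z ^ d) / of_nat d)"
    by (simp add: power_mult mult.commute[of "of_nat j :: complex" "of_nat d" for j])
  moreover have "strict_mono (\<lambda>j. d * j)" using d by (simp add: strict_mono_def)
  ultimately show ?thesis
    by (subst sums_mono_reindex[symmetric, where g = "\<lambda>j. d * j"]) (auto elim: dvdE)
qed

lemma exp_series_eq_prod_divisors:
  fixes c :: "nat \<Rightarrow> nat" and P :: "nat \<Rightarrow> int" and m :: nat and z :: complex
  assumes m: "m > 0" and c_gcd: "\<And>n. n > 0 \<Longrightarrow> c n = c (gcd n m)"
    and P_divisor_sum: "\<And>n. n > 0 \<Longrightarrow> (\<Sum>d | d dvd n. P d) = int (c n)" and z: "norm z < 1"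
  shows "exp (\<Sum>n. of_nat (c (Suc n)) / of_nat (Suc n) * z ^ Suc n) =
     (\<Prod>d | d dvd m. (1 - z ^ d) powr (- of_int (P d) / of_nat d))"
proof -
  define D where "D = {d. d dvd m}"
  have finD: "finite D" using m by (simp add: D_def)
  have Dpos: "d > 0" if "d \<in> D" for d using that m dvd_pos_nat by (auto simp: D_def)
  define S where "S = (\<Sum>d\<in>D. of_int (P d) * (- ln (1 - z ^ d) / of_nat d))"
  have "(\<lambda>n. \<Sum>d\<in>D. of_int (P d) * (if d dvd n then z ^ n / of_nat n else 0)) sums S"
    unfolding S_def by (intro sums_sum sums_mult sums_ln_one_minus_power[OF z Dpos])
  moreover have "(\<Sum>d\<in>D. of_int (P d) * (if d dvd n then z ^ n / of_nat n else 0))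
      = of_nat (c n) / of_nat n * z ^ n" for n
  proof (cases "n = 0")
    case False
    have "(\<Sum>d\<in>D. of_int (P d) * (if d dvd n then z ^ n / of_nat n else 0))
        = of_int (\<Sum>d\<in>D. if d dvd n then P d else 0) * (z ^ n / of_nat n)"
      unfolding of_int_sum sum_distrib_right by (rule sum.cong) simp_all
    also have "(\<Sum>d\<in>D. if d dvd n then P d else 0) = (\<Sum>d\<in>{d\<in>D. d dvd n}. P d)"
      using finD by (simp add: sum.inter_filter)
    also have "{d\<in>D. d dvd n} = {d. d dvd gcd n m}" by (auto simp: D_def)
    also have "(\<Sum>d | d dvd gcd n m. P d) = int (c n)"
      using P_divisor_sum[of "gcd n m"] c_gcd[of n] m False by simp
    finally show ?thesis by simp
  qed simp
  ultimately have "(\<lambda>n. of_nat (c n) / of_nat n * z ^ n) sums S" by simp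
  then have "(\<lambda>n. of_nat (c (Suc n)) / of_nat (Suc n) * z ^ Suc n) sums S"
    by (subst sums_Suc_iff) simp
  then have "(\<Sum>n. of_nat (c (Suc n)) / of_nat (Suc n) * z ^ Suc n) = S"
    by (rule sums_unique[symmetric])
  then have "exp (\<Sum>n. of_nat (c (Suc n)) / of_nat (Suc n) * z ^ Suc n)
      = (\<Prod>d\<in>D. exp (of_int (P d) * (- ln (1 - z ^ d) / of_nat d)))"
    unfolding S_def using finD by (simp add: exp_sum)
  also have "\<dots> = (\<Prod>d\<in>D. (1 - z ^ d) powr (- of_int (P d) / of_nat d))"
  proof (rule prod.cong)
    fix d assume "d \<in> D"
    then have "norm (z ^ d) < 1" using z Dpos by (simp add: norm_power power_less_one_iff)
    then have "1 - z ^ d \<noteq> 0" by auto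
    then show "exp (of_int (P d) * (- ln (1 - z ^ d) / of_nat d)) = (1 - z ^ d) powr (- of_int (P d) / of_nat d)"
      by (simp add: powr_def)
  qed simp
  finally show ?thesis by (simp add: D_def)
qed

theorem mainTheorem1:
  fixes G :: "('a, 'b) monoid_scheme" and \<phi> :: "'a \<Rightarrow> 'a" and m :: nat and k :: zkind
  assumes "group G"
    and "\<phi> \<in> iso G G"
    and "m > 0"
    and "\<forall>g\<in>carrier G. (\<phi> ^^ m) g = g"
    and "\<forall>j. 0 < j \<and> j < m \<longrightarrow> \<not> (\<forall>g\<in>carrier G. (\<phi> ^^ j) g = g)"
    and "\<forall>n\<ge>1. finite (Zset k G \<phi> n)"
  shows "\<forall>z::complex. norm z < 1 \<longrightarrow>
     zeta k G \<phi> z = (\<Prod>d | d dvd m. (1 - z ^ d) powr (- of_int (Pcoef k G \<phi> d) / of_nat d))"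
proof (intro allI impI)
  fix z :: complex
  assume "norm z < 1"
  have "\<phi> \<in> carrier G \<rightarrow> carrier G"
    using iso_imp_homomorphism[OF assms(2)] by (simp add: hom_def)
  then have "Zcount k G \<phi> n = Zcount k G \<phi> (gcd n m)" for n
    using assms(4) by (rule Zcount_funpow_gcd)
  moreover have "(\<Sum>d | d dvd n. Pcoef k G \<phi> d) = int (Zcount k G \<phi> n)" if "n > 0" for n
    unfolding Pcoef_def using moebius_inversion[OF that] .
  ultimately show "zeta k G \<phi> z = (\<Prod>d | d dvd m. (1 - z ^ d) powr (- of_int (Pcoef k G \<phi> d) / of_nat d))"
    unfolding zeta_def using exp_series_eq_prod_divisors[OF assms(3) _ _ \<open>norm z < 1\<close>] by blast
qed

end
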